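(* Let $T$ be a tree with positive edge weights rooted at the homebase $r$, in which no vertex other than $r$ has exactly one child, and let $q\ge 0$. Define labels $\Lambda_v=(\Lambda_v.k,\Lambda_v.u_l,\Lambda_v.u_c)$ for all $v\in V(T)$ recursively from the leaves up (procedure SetLabeling): for a leaf $v$, $\Lambda_v=(1,v,\mathrm{null})$; for a non-leaf $v$, with $d_r=d(r,v)+q$, $$\Lambda_v.k=\max\Big\{1,\ \sum_{u\in c(v)}\big(\Lambda_u.k-\mathbb{1}[\Lambda_u.k=1 \text{ and } d(v,\Lambda_u.u_l)\le d_r]\big)\Big\},$$ $\Lambda_v.u_c$ is a child $u$ of $v$ maximizing $d(v,\Lambda_u.u_l)$, and $\Lambda_v.u_l=\Lambda_{\Lambda_v.u_c}.u_l$. Then for every $v\in V(T)$, every cost-optimal strategy exploring $T$ uses at least $\Lambda_v.k$ agents to explore $T_v$ (i.e., at least $\Lambda_v.k$ agents visit vertices of $T_v$).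
   Context: Exploration model: given a connected graph with positive edge weights, a homebase vertex, and invoking cost $q\ge 0$, a strategy is a sequence of moves, each either invoking a new agent (appearing at the homebase) or an agent traversing an edge incident to its current vertex. A vertex is explored when first visited; the strategy explores the graph when every vertex has been visited by some agent (agents need not return). With $k$ agents, agent $i$ traversing total distance $d_i$ (weights counted with multiplicity), the cost is $kq+\sum_i d_i$; a strategy is cost-optimal if it explores the graph with minimum cost (off-line setting). For the rooted tree: $c(v)$ is the set of children of $v$, $T_v$ the subtree of $v$ and its descendants, a leaf is a non-root vertex with no children, and $d(\cdot,\cdot)$ is weighted distance. *)

theory Defs
  imports Complex_Main
begin

(* A rooted weighted tree is given by a vertex set V, a root (homebase) r,
   a parent function par (meaningful on V - {r}) and a weight function w,
   where w v > 0 is the weight of the edge {v, par v} for v in V - {r}. *)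

definition rooted_tree :: "'a set \<Rightarrow> ('a \<Rightarrow> 'a) \<Rightarrow> ('a \<Rightarrow> real) \<Rightarrow> 'a \<Rightarrow> bool" where
  "rooted_tree V par w r \<longleftrightarrow> finite V \<and> r \<in> V \<and>
     (\<forall>v\<in>V - {r}. par v \<in> V \<and> w v > 0) \<and>
     (\<forall>v\<in>V. \<exists>n. (par ^^ n) v = r)"

definition tadj :: "'a set \<Rightarrow> ('a \<Rightarrow> 'a) \<Rightarrow> 'a \<Rightarrow> 'a \<Rightarrow> 'a \<Rightarrow> bool" where
  "tadj V par r x y \<longleftrightarrow> x \<in> V \<and> y \<in> V \<and>
     ((x \<noteq> r \<and> par x = y) \<or> (y \<noteq> r \<and> par y = x))"

definition twt :: "('a \<Rightarrow> 'a) \<Rightarrow> ('a \<Rightarrow> real) \<Rightarrow> 'a \<Rightarrow> 'a \<Rightarrow> 'a \<Rightarrow> real" where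
  "twt par w r x y = (if x \<noteq> r \<and> par x = y then w x else w y)"

fun is_walk :: "'a set \<Rightarrow> ('a \<Rightarrow> 'a) \<Rightarrow> 'a \<Rightarrow> 'a list \<Rightarrow> bool" where
  "is_walk V par r [] = False"
| "is_walk V par r [x] = (x \<in> V)"
| "is_walk V par r (x # y # ps) = (tadj V par r x y \<and> is_walk V par r (y # ps))"

fun wlen :: "('a \<Rightarrow> 'a) \<Rightarrow> ('a \<Rightarrow> real) \<Rightarrow> 'a \<Rightarrow> 'a list \<Rightarrow> real" where
  "wlen par w r (x # y # ps) = twt par w r x y + wlen par w r (y # ps)"
| "wlen par w r _ = 0"

definition tdist :: "'a set \<Rightarrow> ('a \<Rightarrow> 'a) \<Rightarrow> ('a \<Rightarrow> real) \<Rightarrow> 'a \<Rightarrow> 'a \<Rightarrow> 'a \<Rightarrow> real" where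
  "tdist V par w r x y =
     Inf {wlen par w r p | p. is_walk V par r p \<and> hd p = x \<and> last p = y}"

definition children :: "'a set \<Rightarrow> ('a \<Rightarrow> 'a) \<Rightarrow> 'a \<Rightarrow> 'a \<Rightarrow> 'a set" where
  "children V par r v = {u \<in> V - {r}. par u = v}"

definition subtree :: "'a set \<Rightarrow> ('a \<Rightarrow> 'a) \<Rightarrow> 'a \<Rightarrow> 'a \<Rightarrow> 'a set" where
  "subtree V par r v = {u \<in> V. \<exists>n. (par ^^ n) u = v \<and> (\<forall>m<n. (par ^^ m) u \<noteq> r)}"

definition is_leaf :: "'a set \<Rightarrow> ('a \<Rightarrow> 'a) \<Rightarrow> 'a \<Rightarrow> 'a \<Rightarrow> bool" where
  "is_leaf V par r v \<longleftrightarrow> v \<in> V \<and> v \<noteq> r \<and> children V par r v = {}"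

(* Strategies: sequences of moves. Invoke creates a new agent at the homebase r;
   Step i u moves agent i along the edge from its current vertex to u. *)
datatype 'a move = Invoke | Step nat 'a

(* Execution: the state records, for each agent, the walk it has performed so far. *)
fun exec :: "'a set \<Rightarrow> ('a \<Rightarrow> 'a) \<Rightarrow> 'a \<Rightarrow> 'a list list \<Rightarrow> 'a move list \<Rightarrow> 'a list list option" where
  "exec V par r ws [] = Some ws"
| "exec V par r ws (Invoke # ms) = exec V par r (ws @ [[r]]) ms"
| "exec V par r ws (Step i u # ms) =
     (if i < length ws \<and> tadj V par r (last (ws ! i)) u
      then exec V par r (ws[i := ws ! i @ [u]]) ms else None)"

definition explores :: "'a set \<Rightarrow> ('a \<Rightarrow> 'a) \<Rightarrow> 'a \<Rightarrow> 'a move list \<Rightarrow> bool" where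
  "explores V par r s \<longleftrightarrow> (\<exists>ws. exec V par r [] s = Some ws \<and> V \<subseteq> (\<Union>p\<in>set ws. set p))"

definition strat_cost :: "'a set \<Rightarrow> ('a \<Rightarrow> 'a) \<Rightarrow> ('a \<Rightarrow> real) \<Rightarrow> 'a \<Rightarrow> real \<Rightarrow> 'a move list \<Rightarrow> real" where
  "strat_cost V par w r q s = (case exec V par r [] s of
      None \<Rightarrow> 0
    | Some ws \<Rightarrow> q * real (length ws) + (\<Sum>p\<leftarrow>ws. wlen par w r p))"

definition cost_optimal :: "'a set \<Rightarrow> ('a \<Rightarrow> 'a) \<Rightarrow> ('a \<Rightarrow> real) \<Rightarrow> 'a \<Rightarrow> real \<Rightarrow> 'a move list \<Rightarrow> bool" where
  "cost_optimal V par w r q s \<longleftrightarrow> explores V par r s \<and>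
     (\<forall>s'. explores V par r s' \<longrightarrow> strat_cost V par w r q s \<le> strat_cost V par w r q s')"

definition agents_visiting :: "'a set \<Rightarrow> ('a \<Rightarrow> 'a) \<Rightarrow> 'a \<Rightarrow> 'a move list \<Rightarrow> 'a set \<Rightarrow> nat" where
  "agents_visiting V par r s X =
     card {i. \<exists>ws. exec V par r [] s = Some ws \<and> i < length ws \<and> set (ws ! i) \<inter> X \<noteq> {}}"

(* Output of SetLabeling: Lambda_v = (lk v, ul v, uc v), uc v = None meaning null.
   u_c is any child maximizing d(v, Lambda_u.u_l) (arbitrary tie-breaking). *)
definition is_labeling :: "'a set \<Rightarrow> ('a \<Rightarrow> 'a) \<Rightarrow> ('a \<Rightarrow> real) \<Rightarrow> 'a \<Rightarrow> real \<Rightarrow>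
    ('a \<Rightarrow> nat) \<Rightarrow> ('a \<Rightarrow> 'a) \<Rightarrow> ('a \<Rightarrow> 'a option) \<Rightarrow> bool" where
  "is_labeling V par w r q lk ul uc \<longleftrightarrow> (\<forall>v\<in>V.
     (is_leaf V par r v \<longrightarrow> lk v = 1 \<and> ul v = v \<and> uc v = None) \<and>
     (\<not> is_leaf V par r v \<longrightarrow>
        lk v = max 1 (\<Sum>u\<in>children V par r v.
                 lk u - (if lk u = 1 \<and> tdist V par w r v (ul u) \<le> tdist V par w r r v + q
                         then 1 else 0)) \<and>
        (children V par r v \<noteq> {} \<longrightarrow>
           (\<exists>u. uc v = Some u \<and> u \<in> children V par r v \<and>
                (\<forall>u'\<in>children V par r v. tdist V par w r v (ul u') \<le> tdist V par w r v (ul u)) \<and>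
                ul v = ul u))))"

end

theory Submission
  imports Defs
begin

text \<open>
  Call a child u of v far if its label is 1 and its leaf \<open>ul u\<close> lies farther than
  \<open>d(r,v) + q\<close> from v. In a cost-optimal strategy, every agent visiting such a leaf y must
  end inside \<open>T\<^sub>u\<close>: otherwise its closed excursion from v into \<open>T\<^sub>u\<close> could be cut out and
  replaced by a fresh agent walking from r to v and on to y, and since a closed walk from u
  through y is at least as long as two walks from u to y, this exchange saves nearly
  \<open>d(v,y) - d(r,v) - q > 0\<close>. So each far child, and by induction each child with label
  \<open>k \<ge> 2\<close>, accounts for that many agents ending in its subtree; sibling subtrees are disjoint,
  and an agent ending in \<open>T\<^sub>v\<close> visits \<open>T\<^sub>v\<close>.
\<close>

section \<open>Walks and strategies\<close>

lemma sum_list_update: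
  fixes xs :: "'b::ab_group_add list"
  shows "k < length xs \<Longrightarrow> sum_list (xs[k := x]) = sum_list xs - xs ! k + x"
proof (induction xs arbitrary: k)
  case (Cons a xs)
  then show ?case by (cases k) auto
qed simp

locale tree_walks =
  fixes V :: "'a set" and par :: "'a \<Rightarrow> 'a" and w :: "'a \<Rightarrow> real" and r :: 'a
begin

abbreviation "adj \<equiv> tadj V par r"
abbreviation "wt \<equiv> twt par w r"
abbreviation "walk \<equiv> is_walk V par r"
abbreviation "len \<equiv> wlen par w r"
abbreviation "d \<equiv> tdist V par w r"
abbreviation "T \<equiv> subtree V par r"
abbreviation "ch \<equiv> children V par r"

lemma walk_nonempty: "walk p \<Longrightarrow> p \<noteq> []"
  by auto

lemma walk_subset: "walk p \<Longrightarrow> set p \<subseteq> V"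
  by (induction p rule: is_walk.induct) (auto simp: tadj_def)

lemma walk_Cons: "ys \<noteq> [] \<Longrightarrow> walk (x # ys) \<longleftrightarrow> adj x (hd ys) \<and> walk ys"
  by (cases ys) auto

lemma len_Cons: "ys \<noteq> [] \<Longrightarrow> len (x # ys) = wt x (hd ys) + len ys"
  by (cases ys) auto

lemma walk_append:
  "xs \<noteq> [] \<Longrightarrow> ys \<noteq> [] \<Longrightarrow> walk (xs @ ys) \<longleftrightarrow> walk xs \<and> walk ys \<and> adj (last xs) (hd ys)"
proof (induction xs)
  case (Cons x xs)
  then show ?case
    by (cases "xs = []") (auto simp: walk_Cons tadj_def)
qed simp

lemma len_append:
  "xs \<noteq> [] \<Longrightarrow> ys \<noteq> [] \<Longrightarrow> len (xs @ ys) = len xs + wt (last xs) (hd ys) + len ys"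
proof (induction xs)
  case (Cons x xs)
  then show ?case
    by (cases "xs = []") (auto simp: len_Cons)
qed simp

lemma len_append_shared: "len (xs @ y # ys) = len (xs @ [y]) + len (y # ys)"
  by (cases "xs = []") (simp_all add: len_append)

lemma walk_append_shared: "walk (xs @ [y]) \<Longrightarrow> walk (y # ys) \<Longrightarrow> walk (xs @ y # ys)"
  by (cases "xs = []") (simp_all add: walk_append)

lemma walk_split_shared: "walk (xs @ y # ys) \<Longrightarrow> walk (xs @ [y]) \<and> walk (y # ys)"
  by (cases "xs = []") (auto simp: walk_append dest: walk_subset)

lemma walk_excursion:
  assumes "walk (a @ x # E @ y # b)" and "E \<noteq> []"
  shows "walk (a @ [x])" "walk E" "walk (y # b)" "adj x (hd E)" "adj (last E) y"
  using walk_split_shared[OF assms(1)] walk_split_shared[of E y b] assms(2)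
  by (auto simp: walk_Cons walk_append)

lemma walk_drop_excursion:
  assumes "walk (a @ x # E @ x # b)" "E \<noteq> []"
  shows "walk (a @ x # b)"
  using walk_excursion[OF assms] walk_append_shared by blast

lemma len_drop_excursion:
  assumes "E \<noteq> []"
  shows "len (a @ x # E @ x # b) = len (a @ x # b) + wt x (hd E) + len E + wt (last E) x"
  using assms len_append_shared[of a x "E @ x # b"] len_append_shared[of E x b]
    len_append_shared[of a x b]
  by (simp add: len_Cons len_append)

lemma exec_append:
  "exec V par r ws (s1 @ s2) =
     (case exec V par r ws s1 of None \<Rightarrow> None | Some ws' \<Rightarrow> exec V par r ws' s2)"
proof (induction s1 arbitrary: ws)
  case (Cons m s1)
  then show ?case by (cases m) auto
qed simp

lemma exec_walks_from_root:
  assumes "exec V par r ws0 s = Some ws" and "\<forall>p\<in>set ws0. walk p \<and> hd p = r" and "r \<in> V"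
  shows "\<forall>p\<in>set ws. walk p \<and> hd p = r"
  using assms
proof (induction s arbitrary: ws0)
  case (Cons m s)
  show ?case
  proof (cases m)
    case Invoke
    then show ?thesis using Cons.IH[of "ws0 @ [[r]]"] Cons.prems by simp
  next
    case (Step i u)
    then have i: "i < length ws0" "adj (last (ws0 ! i)) u"
      and rest: "exec V par r (ws0[i := ws0 ! i @ [u]]) s = Some ws"
      using Cons.prems(1) by (simp_all split: if_splits)
    have "ws0 ! i \<in> set ws0" using i(1) by simp
    then have wi: "walk (ws0 ! i)" "hd (ws0 ! i) = r" using Cons.prems(2) by auto
    then have "walk (ws0 ! i @ [u]) \<and> hd (ws0 ! i @ [u]) = r"
      using i(2) walk_nonempty[OF wi(1)] by (simp add: walk_append tadj_def)
    moreover have "set (ws0[i := ws0 ! i @ [u]]) \<subseteq> insert (ws0 ! i @ [u]) (set ws0)"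
      by (rule set_update_subset_insert)
    ultimately have "\<forall>p\<in>set (ws0[i := ws0 ! i @ [u]]). walk p \<and> hd p = r"
      using Cons.prems(2) by blast
    then show ?thesis using Cons.IH[OF rest] Cons.prems(3) by blast
  qed
qed simp

lemma exec_Steps:
  "p \<noteq> [] \<Longrightarrow> walk (last p # xs) \<Longrightarrow>
   exec V par r (ws @ [p]) (map (Step (length ws)) xs @ s) = exec V par r (ws @ [p @ xs]) s"
proof (induction xs arbitrary: p)
  case (Cons x xs)
  then have "adj (last p) x" "walk (x # xs)"
    by (simp_all add: walk_Cons)
  then show ?case using Cons.IH[of "p @ [x]"] by simp
qed simp

lemma walks_realizable:
  "\<forall>p\<in>set ws. walk p \<and> hd p = r \<Longrightarrow> \<exists>s. exec V par r [] s = Some ws"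
proof (induction ws rule: rev_induct)
  case (snoc p ws)
  then obtain s0 where s0: "exec V par r [] s0 = Some ws" by auto
  have p: "p = r # tl p" "walk (r # tl p)"
    using snoc.prems by (cases p; auto)+
  have "exec V par r [] (s0 @ Invoke # map (Step (length ws)) (tl p) @ [])
      = exec V par r (ws @ [[r] @ tl p]) []"
    using s0 exec_Steps[of "[r]" "tl p" ws "[]"] p(2) by (simp add: exec_append)
  also have "\<dots> = Some (ws @ [p])"
    using p(1) by simp
  finally show ?case by blast
qed (auto intro: exI[of _ "[]"])

lemma cost_optimal_covers:
  "cost_optimal V par w r q s \<Longrightarrow> exec V par r [] s = Some ws \<Longrightarrow>
   x \<in> V \<Longrightarrow> \<exists>i<length ws. x \<in> set (ws ! i)"
proof -
  assume "cost_optimal V par w r q s" "exec V par r [] s = Some ws" "x \<in> V"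
  then obtain p where "p \<in> set ws" "x \<in> set p"
    unfolding cost_optimal_def explores_def by auto
  then show ?thesis by (metis in_set_conv_nth)
qed

lemma cost_optimal_le_walks:
  assumes opt: "cost_optimal V par w r q s" and ex: "exec V par r [] s = Some ws"
    and walks: "\<forall>p\<in>set ws'. walk p \<and> hd p = r" and cover: "V \<subseteq> (\<Union>p\<in>set ws'. set p)"
  shows "q * real (length ws) + (\<Sum>p\<leftarrow>ws. len p) \<le> q * real (length ws') + (\<Sum>p\<leftarrow>ws'. len p)"
proof -
  obtain s' where s': "exec V par r [] s' = Some ws'"
    using walks_realizable[OF walks] by blast
  then have "explores V par r s'"
    using cover unfolding explores_def by blast
  then have "strat_cost V par w r q s \<le> strat_cost V par w r q s'"
    using opt unfolding cost_optimal_def by blast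
  then show ?thesis
    using ex s' unfolding strat_cost_def by simp
qed

end

section \<open>Rooted weighted trees\<close>

locale weighted_tree = tree_walks +
  assumes rooted: "rooted_tree V par w r"
begin

lemma finite_V: "finite V"
  and root_in_V: "r \<in> V"
  and par_in_V: "v \<in> V \<Longrightarrow> v \<noteq> r \<Longrightarrow> par v \<in> V"
  and weight_pos: "v \<in> V \<Longrightarrow> v \<noteq> r \<Longrightarrow> w v > 0"
  and reaches_root: "v \<in> V \<Longrightarrow> \<exists>n. (par ^^ n) v = r"
  using rooted unfolding rooted_tree_def by blast+

definition depth :: "'a \<Rightarrow> nat" where
  "depth v = (LEAST n. (par ^^ n) v = r)"

lemma funpow_depth: "v \<in> V \<Longrightarrow> (par ^^ depth v) v = r"
  unfolding depth_def using reaches_root by (metis (mono_tags, lifting) LeastI_ex)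

lemma depth_le: "(par ^^ n) v = r \<Longrightarrow> depth v \<le> n"
  unfolding depth_def by (rule Least_le)

lemma depth_root: "depth r = 0"
  using depth_le[of 0 r] by simp

lemma depth_par:
  assumes "v \<in> V" "v \<noteq> r"
  shows "depth v = Suc (depth (par v))"
proof -
  have "depth v \<noteq> 0" using funpow_depth[OF assms(1)] assms(2) by (metis funpow_0)
  then obtain k where k: "depth v = Suc k" by (metis not0_implies_Suc)
  have "(par ^^ k) (par v) = r"
    using funpow_depth[OF assms(1)] k by (simp add: funpow_Suc_right del: funpow.simps)
  moreover have "(par ^^ Suc (depth (par v))) v = r"
    using funpow_depth[OF par_in_V[OF assms]] by (simp add: funpow_Suc_right del: funpow.simps)
  ultimately show ?thesis using k depth_le by (metis le_antisym Suc_le_mono)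
qed

lemma adj_sym: "adj x y = adj y x"
  unfolding tadj_def by blast

lemma wt_sym:
  assumes "adj x y"
  shows "wt x y = wt y x"
proof -
  have "x \<in> V" "y \<in> V" using assms unfolding tadj_def by auto
  then have "\<not> (x \<noteq> r \<and> par x = y \<and> y \<noteq> r \<and> par y = x)"
    using depth_par[of x] depth_par[of y] by auto
  then show ?thesis using assms unfolding tadj_def twt_def by auto
qed

lemma wt_pos: "adj x y \<Longrightarrow> wt x y > 0"
  unfolding tadj_def twt_def using weight_pos by auto

lemma len_nonneg: "walk p \<Longrightarrow> len p \<ge> 0"
proof (induction p)
  case (Cons x p)
  then show ?case
    by (cases "p = []") (auto simp: walk_Cons len_Cons intro: add_nonneg_nonneg less_imp_le wt_pos)
qed simp

lemma walk_from_root: "v \<in> V \<Longrightarrow> \<exists>p. walk p \<and> hd p = r \<and> last p = v"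
proof (induction "depth v" arbitrary: v)
  case 0
  then have "v = r" using funpow_depth by (metis funpow_0)
  then show ?case using root_in_V by (intro exI[of _ "[r]"]) simp
next
  case (Suc n)
  then have v: "v \<noteq> r" "par v \<in> V" using depth_root par_in_V by (metis nat.simps(3))+
  have "depth (par v) = n"
    using depth_par[OF Suc.prems v(1)] Suc.hyps(2) by simp
  then obtain p where p: "walk p" "hd p = r" "last p = par v"
    using Suc.hyps(1) v(2) by blast
  then have "walk (p @ [v])"
    using walk_nonempty[OF p(1)] Suc.prems v by (simp add: walk_append tadj_def)
  then show ?case using p walk_nonempty[OF p(1)] by (intro exI[of _ "p @ [v]"]) auto
qed

lemma dist_le_len: "walk p \<Longrightarrow> hd p = x \<Longrightarrow> last p = y \<Longrightarrow> d x y \<le> len p"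
  unfolding tdist_def by (rule cInf_lower) (auto intro!: bdd_belowI[of _ 0] len_nonneg)

lemma dist_le_step:
  assumes "adj x z" "walk \<pi>" "hd \<pi> = z" "last \<pi> = y"
  shows "d x y \<le> wt x z + len \<pi>"
proof -
  have "\<pi> \<noteq> []" using assms(2) walk_nonempty by blast
  then show ?thesis
    using dist_le_len[of "x # \<pi>"] assms by (simp add: walk_Cons len_Cons)
qed

lemma dist_approx:
  assumes "y \<in> V" "e > 0"
  shows "\<exists>p. walk p \<and> hd p = r \<and> last p = y \<and> len p < d r y + e"
proof -
  let ?X = "{len p | p. walk p \<and> hd p = r \<and> last p = y}"
  have ne: "?X \<noteq> {}" using walk_from_root[OF assms(1)] by blast
  have bdd: "bdd_below ?X" by (auto intro!: bdd_belowI[of _ 0] len_nonneg)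
  have "Inf ?X < d r y + e" using assms(2) unfolding tdist_def by simp
  then obtain z where "z \<in> ?X" "z < d r y + e"
    using cInf_less_iff[OF ne bdd] by blast
  then show ?thesis by blast
qed

lemma funpow_par_in_V: "x \<in> V \<Longrightarrow> \<forall>m<n. (par ^^ m) x \<noteq> r \<Longrightarrow> (par ^^ n) x \<in> V"
proof (induction n arbitrary: x)
  case (Suc n)
  then have "x \<noteq> r" by (metis funpow_0 zero_less_Suc)
  moreover have "\<forall>m<n. (par ^^ m) (par x) \<noteq> r"
    using Suc.prems(2) by (metis Suc_mono comp_apply funpow_Suc_right)
  ultimately show ?case
    using Suc par_in_V by (simp add: funpow_Suc_right del: funpow.simps)
qed simp

lemma depth_funpow:
  "x \<in> V \<Longrightarrow> \<forall>m<n. (par ^^ m) x \<noteq> r \<Longrightarrow> depth x = depth ((par ^^ n) x) + n"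
proof (induction n arbitrary: x)
  case (Suc n)
  then have x: "x \<noteq> r" by (metis funpow_0 zero_less_Suc)
  moreover have "\<forall>m<n. (par ^^ m) (par x) \<noteq> r"
    using Suc.prems(2) by (metis Suc_mono comp_apply funpow_Suc_right)
  ultimately have "depth (par x) = depth ((par ^^ n) (par x)) + n"
    using Suc par_in_V by blast
  then show ?case
    using depth_par[OF Suc.prems(1) x] by (simp add: funpow_Suc_right del: funpow.simps)
qed simp

lemma subtree_subset: "T u \<subseteq> V"
  unfolding subtree_def by blast

lemma finite_subtree: "finite (T u)"
  using finite_subset[OF subtree_subset finite_V] .

lemma self_in_subtree: "u \<in> V \<Longrightarrow> u \<in> T u"
  unfolding subtree_def by (auto intro: exI[of _ 0])

lemma depth_subtree: "x \<in> T u \<Longrightarrow> \<exists>n. depth x = depth u + n \<and> (par ^^ n) x = u"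
  unfolding subtree_def using depth_funpow by blast

lemma root_notin_subtree: "u \<noteq> r \<Longrightarrow> r \<notin> T u"
proof
  assume "u \<noteq> r" "r \<in> T u"
  then obtain n where "(par ^^ n) r = u" "\<forall>m<n. (par ^^ m) r \<noteq> r"
    unfolding subtree_def by blast
  with \<open>u \<noteq> r\<close> show False by (cases n) auto
qed

lemma par_notin_subtree: "u \<in> V \<Longrightarrow> u \<noteq> r \<Longrightarrow> par u \<notin> T u"
  using depth_subtree depth_par by fastforce

lemma subtree_par: "u \<noteq> r \<Longrightarrow> T u \<subseteq> T (par u)"
proof
  fix x assume u: "u \<noteq> r" and "x \<in> T u"
  then obtain n where n: "x \<in> V" "(par ^^ n) x = u" "\<forall>m<n. (par ^^ m) x \<noteq> r"
    unfolding subtree_def by blast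
  then have "(par ^^ Suc n) x = par u" "\<forall>m<Suc n. (par ^^ m) x \<noteq> r"
    using u by (auto simp: less_Suc_eq)
  then show "x \<in> T (par u)" unfolding subtree_def using n(1) by blast
qed

lemma subtree_cases:
  assumes "y \<in> T x"
  shows "y = x \<or> (\<exists>z\<in>ch x. y \<in> T z)"
proof -
  obtain n where n: "y \<in> V" "(par ^^ n) y = x" "\<forall>m<n. (par ^^ m) y \<noteq> r"
    using assms unfolding subtree_def by blast
  show ?thesis
  proof (cases n)
    case 0
    then show ?thesis using n by simp
  next
    case (Suc k)
    define z where "z = (par ^^ k) y"
    have "z \<in> V" "z \<noteq> r" "par z = x"
      using funpow_par_in_V[of y k] n Suc unfolding z_def by auto
    moreover have "y \<in> T z"
      unfolding subtree_def z_def using n Suc less_SucI by blast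
    ultimately show ?thesis unfolding children_def by blast
  qed
qed

lemma par_in_subtree: "x \<in> T u \<Longrightarrow> x \<noteq> u \<Longrightarrow> par x \<in> T u"
proof -
  assume x: "x \<in> T u" "x \<noteq> u"
  then obtain n where n: "x \<in> V" "(par ^^ n) x = u" "\<forall>m<n. (par ^^ m) x \<noteq> r"
    unfolding subtree_def by blast
  then obtain k where k: "n = Suc k" using x(2) by (metis funpow_0 not0_implies_Suc)
  then have "x \<noteq> r" using n(3) by (metis funpow_0 zero_less_Suc)
  moreover have "(par ^^ k) (par x) = u"
    using n(2) k by (simp add: funpow_Suc_right del: funpow.simps)
  moreover have "\<forall>m<k. (par ^^ m) (par x) \<noteq> r"
    using n(3) k by (metis Suc_mono comp_apply funpow_Suc_right)
  ultimately show ?thesis unfolding subtree_def using par_in_V[OF n(1)] by blast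
qed

lemma child_in_subtree: "x \<in> T u \<Longrightarrow> b \<in> V \<Longrightarrow> b \<noteq> r \<Longrightarrow> par b = x \<Longrightarrow> b \<in> T u"
proof -
  assume x: "x \<in> T u" and b: "b \<in> V" "b \<noteq> r" "par b = x"
  then obtain n where n: "(par ^^ n) x = u" "\<forall>m<n. (par ^^ m) x \<noteq> r"
    unfolding subtree_def by blast
  have "(par ^^ Suc n) b = u"
    using n(1) b by (simp add: funpow_Suc_right del: funpow.simps)
  moreover have "\<forall>m<Suc n. (par ^^ m) b \<noteq> r"
    using n(2) b by (auto simp: less_Suc_eq_0_disj funpow_Suc_right simp del: funpow.simps)
  ultimately show ?thesis unfolding subtree_def using b(1) by blast
qed

lemma edge_leaving_subtree: "u \<noteq> r \<Longrightarrow> a \<in> T u \<Longrightarrow> adj a b \<Longrightarrow> b \<notin> T u \<Longrightarrow> a = u \<and> b = par u"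
  unfolding tadj_def using par_in_subtree child_in_subtree by metis

lemma subtrees_disjoint:
  assumes "u1 \<in> ch v" "u2 \<in> ch v" "u1 \<noteq> u2"
  shows "T u1 \<inter> T u2 = {}"
proof -
  have "depth u1 = depth u2"
    using assms(1,2) depth_par unfolding children_def by auto
  then show ?thesis
    using depth_subtree assms(3) by (metis add_left_cancel disjoint_iff)
qed

lemma card_subtree_child: "u \<in> ch v \<Longrightarrow> card (T u) < card (T v)"
proof -
  assume "u \<in> ch v"
  then have u: "u \<in> V" "u \<noteq> r" "par u = v" unfolding children_def by auto
  then have "T u \<subset> T v"
    using subtree_par self_in_subtree[OF par_in_V] par_notin_subtree by blast
  then show ?thesis using psubset_card_mono[OF finite_subtree] by blast
qed

lemma walk_enters_subtree:
  assumes p: "walk p" and u: "u \<noteq> r" and ends: "hd p \<notin> T u" "last p \<notin> T u"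
    and y: "y \<in> set p" "y \<in> T u"
  obtains a E b where "p = a @ par u # E @ par u # b" "walk E" "hd E = u" "last E = u"
    "set E \<subseteq> T u" "y \<in> set E"
proof -
  obtain c1 c2 where c: "p = c1 @ y # c2" using y(1) split_list by metis
  have "c1 \<noteq> []" "c2 \<noteq> []" using c ends y(2) by auto
  then have "hd c1 \<notin> T u" "last c2 \<notin> T u" using c ends by auto
  then have "\<exists>x\<in>set c1. x \<notin> T u" "\<exists>x\<in>set c2. x \<notin> T u"
    using \<open>c1 \<noteq> []\<close> \<open>c2 \<noteq> []\<close> hd_in_set last_in_set by metis+
  then obtain a o1 b1 a2 o2 b where
    c1: "c1 = a @ o1 # b1" "o1 \<notin> T u" "\<forall>x\<in>set b1. x \<in> T u" and
    c2: "c2 = a2 @ o2 # b" "o2 \<notin> T u" "\<forall>x\<in>set a2. x \<in> T u"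
    using split_list_last_prop[of c1 "\<lambda>x. x \<notin> T u"] split_list_first_prop[of c2 "\<lambda>x. x \<notin> T u"]
    by blast
  define E where "E = b1 @ y # a2"
  have p_eq: "p = a @ o1 # E @ o2 # b" and E: "E \<noteq> []" "set E \<subseteq> T u" "y \<in> set E"
    using c c1 c2 y(2) unfolding E_def by auto
  have "walk E" "adj (hd E) o1" "adj (last E) o2"
    using walk_excursion[OF p[unfolded p_eq] E(1)] adj_sym by auto
  moreover have "hd E \<in> T u" "last E \<in> T u" using E by auto
  ultimately have "hd E = u" "o1 = par u" "last E = u" "o2 = par u"
    using edge_leaving_subtree[OF u] c1(2) c2(2) by blast+
  then show ?thesis using that p_eq \<open>walk E\<close> E(2,3) by blast
qed

lemma closed_walk_shortcut:
  assumes "walk c" "hd c = x" "last c = x" "set c \<subseteq> T x" "y \<in> set c"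
  shows "\<exists>p \<pi>. walk p \<and> hd p = x \<and> last p = y \<and> set c \<subseteq> set p \<and>
               walk \<pi> \<and> hd \<pi> = x \<and> last \<pi> = y \<and> len p + len \<pi> \<le> len c"
  using assms
proof (induction "length c" arbitrary: c x rule: less_induct)
  case less
  have x: "x \<in> V"
    using walk_subset[OF less.prems(1)] walk_nonempty[OF less.prems(1)] less.prems(2) by auto
  show ?case
  proof (cases "y = x")
    case True
    then show ?thesis using less.prems x by (intro exI[of _ c] exI[of _ "[x]"]) simp
  next
    case False
    then obtain z where z: "z \<in> ch x" "y \<in> T z"
      using subtree_cases less.prems(4,5) by blast
    then have z': "z \<in> V" "z \<noteq> r" "par z = x" unfolding children_def by auto
    then have "hd c \<notin> T z" "last c \<notin> T z"
      using par_notin_subtree less.prems(2,3) by auto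
    then obtain a E b where c: "c = a @ x # E @ x # b" and
      E: "walk E" "hd E = z" "last E = z" "set E \<subseteq> T z" "y \<in> set E"
      using walk_enters_subtree[OF less.prems(1) z'(2) _ _ less.prems(5) z(2)]
      unfolding z'(3) by blast
    have "E \<noteq> []" using E(1) walk_nonempty by blast
    have "length E < length c" using c by simp
    then obtain pE \<pi>E where IH: "walk pE" "hd pE = z" "last pE = y" "set E \<subseteq> set pE"
        "walk \<pi>E" "hd \<pi>E = z" "last \<pi>E = y" "len pE + len \<pi>E \<le> len E"
      using less.hyps E by blast
    define p0 where "p0 = a @ x # b"
    have p0: "walk p0" "hd p0 = x" "last p0 = x" "p0 \<noteq> []"
      using walk_drop_excursion[OF less.prems(1)[unfolded c] \<open>E \<noteq> []\<close>] less.prems(2,3) c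
      unfolding p0_def by (cases a; simp)+
    have "adj x z"
      using walk_excursion(4)[OF less.prems(1)[unfolded c] \<open>E \<noteq> []\<close>] E(2) by simp
    then have "walk (p0 @ pE)" "walk (x # \<pi>E)"
      using p0 IH walk_nonempty by (simp_all add: walk_append walk_Cons)
    moreover have "len (p0 @ pE) = len p0 + wt x z + len pE"
      using len_append[of p0 pE] p0 IH(1,2) walk_nonempty by simp
    moreover have "len (x # \<pi>E) = wt x z + len \<pi>E"
      using len_Cons IH(5,6) walk_nonempty by simp
    moreover have "len c = len p0 + wt x z + len E + wt z x"
      using len_drop_excursion[OF \<open>E \<noteq> []\<close>] E(2,3) c unfolding p0_def by simp
    moreover have "set c \<subseteq> set (p0 @ pE)"
      using c IH(4) unfolding p0_def by auto
    ultimately show ?thesis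
      using p0 IH wt_sym[OF \<open>adj x z\<close>] walk_nonempty
      by (intro exI[of _ "p0 @ pE"] exI[of _ "x # \<pi>E"]) simp
  qed
qed

section \<open>Exchange arguments for optimal strategies\<close>

lemma cost_optimal_split_walk:
  assumes opt: "cost_optimal V par w r q s" and ex: "exec V par r [] s = Some ws"
    and i: "i < length ws"
    and p1: "walk p1" "hd p1 = r" and p2: "walk p2" "hd p2 = r"
    and covered: "set (ws ! i) \<subseteq> set p1 \<union> set p2"
  shows "len (ws ! i) \<le> q + len p1 + len p2"
proof -
  define ws' where "ws' = ws[i := p1] @ [p2]"
  have "\<forall>p\<in>set ws. walk p \<and> hd p = r"
    using exec_walks_from_root[OF ex] root_in_V by simp
  moreover have "set (ws[i := p1]) \<subseteq> insert p1 (set ws)"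
    by (rule set_update_subset_insert)
  ultimately have walks: "\<forall>p\<in>set ws'. walk p \<and> hd p = r"
    using p1 p2 unfolding ws'_def by auto
  have "x \<in> (\<Union>p\<in>set ws'. set p)" if "x \<in> V" for x
  proof -
    obtain k where k: "k < length ws" "x \<in> set (ws ! k)"
      using cost_optimal_covers[OF opt ex \<open>x \<in> V\<close>] by blast
    show ?thesis
    proof (cases "k = i")
      case True
      moreover have "p1 \<in> set ws'" "p2 \<in> set ws'"
        using i unfolding ws'_def by (auto simp: set_update_memI)
      ultimately show ?thesis using k(2) covered by blast
    next
      case False
      then have "ws' ! k = ws ! k" "k < length ws'"
        using k(1) unfolding ws'_def by (simp_all add: nth_append)
      then have "ws ! k \<in> set ws'" by (metis nth_mem)
      then show ?thesis using k(2) by blast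
    qed
  qed
  then have "q * real (length ws) + (\<Sum>p\<leftarrow>ws. len p) \<le> q * real (length ws') + (\<Sum>p\<leftarrow>ws'. len p)"
    using cost_optimal_le_walks[OF opt ex walks] by blast
  then show ?thesis
    using i unfolding ws'_def by (simp add: map_update sum_list_update algebra_simps)
qed

lemma cost_optimal_visitor_ends_in_subtree:
  assumes opt: "cost_optimal V par w r q s" and ex: "exec V par r [] s = Some ws"
    and i: "i < length ws" and u: "u \<in> V" "u \<noteq> r"
    and y: "y \<in> T u" "y \<in> set (ws ! i)" and far: "d (par u) y > d r (par u) + q"
  shows "last (ws ! i) \<in> T u"
proof (rule ccontr)
  assume out: "last (ws ! i) \<notin> T u"
  define v where "v = par u"
  have "ws ! i \<in> set ws" using i by simp
  then have p: "walk (ws ! i)" "hd (ws ! i) = r"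
    using exec_walks_from_root[OF ex] root_in_V by auto
  then have "hd (ws ! i) \<notin> T u" using root_notin_subtree[OF u(2)] by simp
  then obtain a E b where p_eq: "ws ! i = a @ v # E @ v # b" and
    E: "walk E" "hd E = u" "last E = u" "set E \<subseteq> T u" "y \<in> set E"
    using walk_enters_subtree[OF p(1) u(2) _ out y(2,1)] unfolding v_def by blast
  obtain pe \<pi> where S: "walk pe" "hd pe = u" "last pe = y" "set E \<subseteq> set pe"
      "walk \<pi>" "hd \<pi> = u" "last \<pi> = y" "len pe + len \<pi> \<le> len E"
    using closed_walk_shortcut[OF E] by blast
  have "E \<noteq> []" using E(1) walk_nonempty by blast
  have vu: "adj v u"
    using walk_excursion(4)[OF p(1)[unfolded p_eq] \<open>E \<noteq> []\<close>] E(2) by simp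
  have dist_vy: "d v y \<le> wt v u + len \<pi>"
    using dist_le_step[OF vu S(5,6,7)] .
  obtain P where P: "walk P" "hd P = r" "last P = v" "len P < d r v + (d v y - q - d r v)"
    using dist_approx[of v "d v y - q - d r v"] far par_in_V[OF u] unfolding v_def by auto
  have "walk (a @ v # b)" "hd (a @ v # b) = r"
    using walk_drop_excursion[OF p(1)[unfolded p_eq] \<open>E \<noteq> []\<close>] p(2) p_eq by (cases a; simp)+
  moreover have "walk (P @ pe)" "hd (P @ pe) = r"
    using P S(1,2) vu walk_nonempty[OF P(1)] walk_nonempty[OF S(1)] by (simp_all add: walk_append)
  moreover have "set (ws ! i) \<subseteq> set (a @ v # b) \<union> set (P @ pe)"
    using p_eq S(4) by auto
  ultimately have "len (ws ! i) \<le> q + len (a @ v # b) + len (P @ pe)"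
    using cost_optimal_split_walk[OF opt ex i] by blast
  moreover have "len (ws ! i) = len (a @ v # b) + wt v u + len E + wt u v"
    using len_drop_excursion[OF \<open>E \<noteq> []\<close>] p_eq E(2,3) by simp
  moreover have "len (P @ pe) = len P + wt v u + len pe"
    using len_append P(3) S(2) walk_nonempty[OF P(1)] walk_nonempty[OF S(1)] by simp
  ultimately show False
    using wt_sym[OF vu] S(8) dist_vy P(4) by linarith
qed

end

section \<open>Agents certified by the labels\<close>

definition agents_ending_in :: "'a list list \<Rightarrow> 'a set \<Rightarrow> nat set" where
  "agents_ending_in ws X = {i. i < length ws \<and> last (ws ! i) \<in> X}"

context weighted_tree
begin

lemma sum_agents_ending_in_children:
  "(\<Sum>u\<in>ch v. card (agents_ending_in ws (T u))) \<le> card (agents_ending_in ws (T v))"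
proof -
  have "finite (ch v)" using finite_subset[OF _ finite_V] unfolding children_def by auto
  moreover have "agents_ending_in ws (T u1) \<inter> agents_ending_in ws (T u2) = {}"
    if "u1 \<in> ch v" "u2 \<in> ch v" "u1 \<noteq> u2" for u1 u2
    using subtrees_disjoint[OF that] unfolding agents_ending_in_def by blast
  ultimately have "(\<Sum>u\<in>ch v. card (agents_ending_in ws (T u))) =
      card (\<Union>u\<in>ch v. agents_ending_in ws (T u))"
    by (intro card_UN_disjoint[symmetric]) (auto simp: agents_ending_in_def)
  also have "\<dots> \<le> card (agents_ending_in ws (T v))"
    using subtree_par unfolding agents_ending_in_def children_def
    by (intro card_mono) fastforce+
  finally show ?thesis .
qed

context
  fixes q :: real and lk :: "'a \<Rightarrow> nat" and ul :: "'a \<Rightarrow> 'a" and uc :: "'a \<Rightarrow> 'a option"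
  assumes labeling: "is_labeling V par w r q lk ul uc"
begin

lemma labeling_at:
  assumes "v \<in> V"
  shows "is_leaf V par r v \<Longrightarrow> lk v = 1 \<and> ul v = v"
    and "\<not> is_leaf V par r v \<Longrightarrow>
      lk v = max 1 (\<Sum>u\<in>ch v. lk u - (if lk u = 1 \<and> d v (ul u) \<le> d r v + q then 1 else 0))"
    and "ch v \<noteq> {} \<Longrightarrow> \<exists>u\<in>ch v. ul v = ul u"
  using bspec[OF labeling[unfolded is_labeling_def] assms] assms
  by (auto simp: is_leaf_def)

lemma label_leaf_in_subtree: "u \<in> V \<Longrightarrow> u \<noteq> r \<Longrightarrow> ul u \<in> T u"
proof (induction u rule: measure_induct_rule[where f = "\<lambda>u. card (T u)"])
  case (less u)
  show ?case
  proof (cases "ch u = {}")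
    case True
    then show ?thesis
      using labeling_at(1) less.prems self_in_subtree unfolding is_leaf_def by auto
  next
    case False
    then obtain c where c: "c \<in> ch u" "ul u = ul c"
      using labeling_at(3) less.prems(1) by blast
    then have "c \<in> V" "c \<noteq> r" "par c = u" unfolding children_def by auto
    then show ?thesis
      using less.IH[OF card_subtree_child[OF c(1)]] c(2) subtree_par by auto
  qed
qed

lemma label_le_agents_ending_in_subtree:
  assumes opt: "cost_optimal V par w r q s" and ex: "exec V par r [] s = Some ws"
  shows "v \<in> V \<Longrightarrow> 2 \<le> lk v \<Longrightarrow> lk v \<le> card (agents_ending_in ws (T v))"
proof (induction v rule: measure_induct_rule[where f = "\<lambda>u. card (T u)"])
  case (less v)
  define f where
    "f u = lk u - (if lk u = 1 \<and> d v (ul u) \<le> d r v + q then 1 else 0)" for u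
  have "\<not> is_leaf V par r v"
    using labeling_at(1)[OF less.prems(1)] less.prems(2) by auto
  then have "lk v = max 1 (\<Sum>u\<in>ch v. f u)"
    using labeling_at(2) less.prems(1) unfolding f_def by simp
  then have lk_v: "lk v = (\<Sum>u\<in>ch v. f u)"
    using less.prems(2) by (simp add: max_def split: if_splits)
  have "f u \<le> card (agents_ending_in ws (T u))" if u: "u \<in> ch v" for u
  proof -
    have u': "u \<in> V" "u \<noteq> r" "par u = v" using u unfolding children_def by auto
    have "lk u \<le> 1 \<Longrightarrow> f u \<noteq> 0 \<Longrightarrow> d v (ul u) > d r v + q \<and> f u = 1"
      unfolding f_def by (auto split: if_splits)
    then consider "2 \<le> lk u" | "f u = 0" | "d v (ul u) > d r v + q" "f u = 1"
      by linarith
    then show ?thesis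
    proof cases
      case 1
      then show ?thesis using less.IH[OF card_subtree_child[OF u] u'(1)] unfolding f_def by simp
    next
      case 3
      have y: "ul u \<in> T u" using label_leaf_in_subtree[OF u'(1,2)] .
      then obtain i where i: "i < length ws" "ul u \<in> set (ws ! i)"
        using cost_optimal_covers[OF opt ex] subtree_subset by blast
      then have "i \<in> agents_ending_in ws (T u)"
        using cost_optimal_visitor_ends_in_subtree[OF opt ex i(1) u'(1,2) y i(2)] 3(1) u'(3)
        unfolding agents_ending_in_def by simp
      moreover have "finite (agents_ending_in ws (T u))" unfolding agents_ending_in_def by simp
      ultimately have "card (agents_ending_in ws (T u)) > 0" using card_gt_0_iff by blast
      then show ?thesis using 3(2) by simp
    qed simp
  qed
  then have "lk v \<le> (\<Sum>u\<in>ch v. card (agents_ending_in ws (T u)))"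
    unfolding lk_v by (rule sum_mono)
  then show ?case using sum_agents_ending_in_children by (rule order_trans)
qed

end

end

theorem lemma3:
  fixes V :: "'a set" and par :: "'a \<Rightarrow> 'a" and w :: "'a \<Rightarrow> real" and r :: 'a
    and q :: real and lk :: "'a \<Rightarrow> nat" and ul :: "'a \<Rightarrow> 'a" and uc :: "'a \<Rightarrow> 'a option"
    and v :: 'a and s :: "'a move list"
  assumes "rooted_tree V par w r"
    and "\<forall>x\<in>V - {r}. card (children V par r x) \<noteq> 1"
    and "q \<ge> 0"
    and "is_labeling V par w r q lk ul uc"
    and "v \<in> V"
    and "cost_optimal V par w r q s"
  shows "agents_visiting V par r s (subtree V par r v) \<ge> lk v"
proof -
  interpret weighted_tree V par w r by unfold_locales (rule assms(1))
  obtain ws where ex: "exec V par r [] s = Some ws"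
    using assms(6) unfolding cost_optimal_def explores_def by blast
  define A where "A = {i. i < length ws \<and> set (ws ! i) \<inter> T v \<noteq> {}}"
  have visiting: "agents_visiting V par r s (T v) = card A"
    unfolding agents_visiting_def A_def using ex by simp
  have "finite A" unfolding A_def by simp
  have "agents_ending_in ws (T v) \<subseteq> A"
  proof
    fix i assume "i \<in> agents_ending_in ws (T v)"
    then have i: "i < length ws" "last (ws ! i) \<in> T v" unfolding agents_ending_in_def by auto
    then have "walk (ws ! i)" using exec_walks_from_root[OF ex] root_in_V by auto
    then show "i \<in> A" using i walk_nonempty last_in_set unfolding A_def by blast
  qed
  obtain i where "i < length ws" "v \<in> set (ws ! i)"
    using cost_optimal_covers[OF assms(6) ex assms(5)] by blast
  then have "A \<noteq> {}" using self_in_subtree[OF assms(5)] unfolding A_def by blast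
  show ?thesis
  proof (cases "2 \<le> lk v")
    case True
    then have "lk v \<le> card (agents_ending_in ws (T v))"
      using label_le_agents_ending_in_subtree[OF assms(4,6) ex assms(5)] by blast
    also have "\<dots> \<le> card A" using card_mono[OF \<open>finite A\<close>] \<open>agents_ending_in ws (T v) \<subseteq> A\<close> .
    finally show ?thesis using visiting by simp
  next
    case False
    then have "lk v \<le> 1" by simp
    also have "1 \<le> card A" using \<open>A \<noteq> {}\<close> \<open>finite A\<close> by (simp add: Suc_leI card_gt_0_iff)
    finally show ?thesis using visiting by simp
  qed
qed

end
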